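(* A nanoword over $\alpha$ of length $\le4$ is homotopically skew-symmetric if and only if it is contractible. A nanoword of length $\le4$ is homotopically symmetric if and only if it is contractible or symmetric.
   Context: Fix a set $\alpha$ with an involution $\tau$. An $\alpha$-alphabet is a set $\mathcal A$ with a map $A\mapsto|A|\in\alpha$. A nanoword over $\alpha$ is a pair $(\mathcal A,w)$ with $\mathcal A$ a finite $\alpha$-alphabet and $w$ a word in which each letter of $\mathcal A$ occurs exactly twice; its length is the length of $w$. Nanowords $(\mathcal A_1,w_1),(\mathcal A_2,w_2)$ are isomorphic if a bijection $f:\mathcal A_1\to\mathcal A_2$ with $|f(A)|=|A|$ carries $w_1$ letterwise to $w_2$. Homotopy moves ($x,y,z,t$ words in the remaining letters): (1) $(\mathcal A,xAAy)\mapsto(\mathcal A\setminus\{A\},xy)$; (2) $(\mathcal A,xAByBAz)\mapsto(\mathcal A\setminus\{A,B\},xyz)$ if $|B|=\tau(|A|)$; (3) $(\mathcal A,xAByACzBCt)\mapsto(\mathcal A,xBAyCAzCBt)$ if $A,B,C$ distinct with $|A|=|B|=|C|$. Homotopy ($\simeq$) is generated by isomorphisms, these moves and inverses; contractible means homotopic to the empty nanoword. The opposite of $(\mathcal A,w)$ is $w^-=(\mathcal A,\text{$w$ read backwards})$; the inverse is $\overline w=(\overline{\mathcal A},w)$, where $\overline{\mathcal A}$ is the set $\mathcal A$ with projection $A\mapsto\tau(|A|)$. $w$ is symmetric if it is isomorphic to $w^-$, homotopically symmetric if $w\simeq w^-$, and homotopically skew-symmetric if $w\simeq\overline w^-$.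 *)

theory Defs
  imports Main
begin

text \<open>A nanoword over alpha (elements of type 'a): a finite alphabet of letters
  (letters drawn from nat), a projection of letters to alpha, and a word.\<close>
type_synonym 'a nanoword = "nat set \<times> (nat \<Rightarrow> 'a) \<times> nat list"

definition is_nanoword :: "'a nanoword \<Rightarrow> bool" where
  "is_nanoword n = (case n of (A, p, w) \<Rightarrow>
     finite A \<and> set w \<subseteq> A \<and> (\<forall>x\<in>A. count_list w x = 2))"

definition nw_length :: "'a nanoword \<Rightarrow> nat" where
  "nw_length n = length (snd (snd n))"

definition nw_iso :: "'a nanoword \<Rightarrow> 'a nanoword \<Rightarrow> bool" where
  "nw_iso n1 n2 = (case n1 of (A1, p1, w1) \<Rightarrow> case n2 of (A2, p2, w2) \<Rightarrow>
     (\<exists>f. bij_betw f A1 A2 \<and> (\<forall>a\<in>A1. p2 (f a) = p1 a) \<and> map f w1 = w2))"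

inductive hstep :: "('a \<Rightarrow> 'a) \<Rightarrow> 'a nanoword \<Rightarrow> 'a nanoword \<Rightarrow> bool" for \<tau> where
  iso: "is_nanoword n1 \<Longrightarrow> is_nanoword n2 \<Longrightarrow> nw_iso n1 n2 \<Longrightarrow> hstep \<tau> n1 n2"
| H1: "is_nanoword (A, p, x @ [a, a] @ y) \<Longrightarrow>
       hstep \<tau> (A, p, x @ [a, a] @ y) (A - {a}, p, x @ y)"
| H2: "is_nanoword (A, p, x @ [a, b] @ y @ [b, a] @ z) \<Longrightarrow> p b = \<tau> (p a) \<Longrightarrow>
       hstep \<tau> (A, p, x @ [a, b] @ y @ [b, a] @ z) (A - {a, b}, p, x @ y @ z)"
| H3: "is_nanoword (A, p, x @ [a, b] @ y @ [a, c] @ z @ [b, c] @ t) \<Longrightarrow>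
       distinct [a, b, c] \<Longrightarrow> p a = p b \<Longrightarrow> p b = p c \<Longrightarrow>
       hstep \<tau> (A, p, x @ [a, b] @ y @ [a, c] @ z @ [b, c] @ t)
               (A, p, x @ [b, a] @ y @ [c, a] @ z @ [c, b] @ t)"

definition homotopic :: "('a \<Rightarrow> 'a) \<Rightarrow> 'a nanoword \<Rightarrow> 'a nanoword \<Rightarrow> bool" where
  "homotopic \<tau> = (symclp (hstep \<tau>))\<^sup>*\<^sup>*"

definition empty_nanoword :: "'a nanoword" where
  "empty_nanoword = ({}, (\<lambda>_. undefined), [])"

definition contractible :: "('a \<Rightarrow> 'a) \<Rightarrow> 'a nanoword \<Rightarrow> bool" where
  "contractible \<tau> n = homotopic \<tau> n empty_nanoword"

definition nw_opposite :: "'a nanoword \<Rightarrow> 'a nanoword" where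
  "nw_opposite n = (case n of (A, p, w) \<Rightarrow> (A, p, rev w))"

definition nw_inverse :: "('a \<Rightarrow> 'a) \<Rightarrow> 'a nanoword \<Rightarrow> 'a nanoword" where
  "nw_inverse \<tau> n = (case n of (A, p, w) \<Rightarrow> (A, \<tau> \<circ> p, w))"

definition nw_symmetric :: "'a nanoword \<Rightarrow> bool" where
  "nw_symmetric n = nw_iso n (nw_opposite n)"

definition homot_symmetric :: "('a \<Rightarrow> 'a) \<Rightarrow> 'a nanoword \<Rightarrow> bool" where
  "homot_symmetric \<tau> n = homotopic \<tau> n (nw_opposite n)"

definition homot_skew_symmetric :: "('a \<Rightarrow> 'a) \<Rightarrow> 'a nanoword \<Rightarrow> bool" where
  "homot_skew_symmetric \<tau> n = homotopic \<tau> n (nw_opposite (nw_inverse \<tau> n))"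

end

theory Submission
  imports Defs "HOL-Library.Z2" "HOL-Library.Disjoint_Sets" "HOL-Combinatorics.Transposition"
begin

(*
  Up to isomorphism a nanoword of length at most four is the empty word, AA, AABB, ABBA or ABAB.
  The first four are contractible by H1 moves, and so is ABAB when |B| = \<tau> |A|, via a sequence of
  moves through words in six letters. Every other ABAB is told apart from the empty word, from its
  opposite and from its skew version by an invariant built from the linked pairs of letters (those
  that read u v u v once all other letters are deleted). If |B| is neither |A| nor \<tau> |A|, this is
  the parity of the number of linked pairs (u, v) with |u| in {|A|, \<tau> |A|} and |v| in
  {|B|, \<tau> |B|}. If |A| = |B| \<noteq> \<tau> |A|, it is the sum over letters u of f |u| * \<phi> (sum over v
  of \<plusminus>g |v|), with f = g the \<tau>-odd indicator of |A| and \<phi> the indicator of 1; in this case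
  ABAB is symmetric.
*)

section \<open>Nanowords and their homotopy\<close>

lemma involution_eq_iff: "(\<And>x. \<tau> (\<tau> x) = x) \<Longrightarrow> \<tau> x = y \<longleftrightarrow> x = \<tau> y"
  by metis

lemma nanoword_set: "is_nanoword (A, p, w) \<Longrightarrow> set w = A"
  unfolding is_nanoword_def using count_notin by fastforce

lemma nanoword_count: "is_nanoword (A, p, w) \<Longrightarrow> u \<in> set w \<Longrightarrow> count_list w u = 2"
  unfolding is_nanoword_def by auto

lemma nanoword_relabel: "is_nanoword (A, p, w) \<Longrightarrow> is_nanoword (A, q, w)"
  unfolding is_nanoword_def by auto

lemma nanoword_rev: "is_nanoword (A, p, w) \<Longrightarrow> is_nanoword (A, p, rev w)"
  unfolding is_nanoword_def by auto

lemma H1_letter_fresh: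
  assumes "is_nanoword (A, p, x @ [a, a] @ y)"
  shows "a \<notin> set (x @ y)"
  using nanoword_count[OF assms, of a] by (auto simp: count_list_0_iff[symmetric])

lemma H2_letters_fresh:
  assumes "is_nanoword (A, p, x @ [a, b] @ y @ [b, a] @ z)"
  shows "a \<noteq> b" "a \<notin> set (x @ y @ z)" "b \<notin> set (x @ y @ z)"
  using nanoword_count[OF assms, of a] nanoword_count[OF assms, of b]
  by (auto simp: count_list_0_iff[symmetric] split: if_splits)

lemma H3_letters_fresh:
  assumes "is_nanoword (A, p, x @ [a, b] @ y @ [a, c] @ z @ [b, c] @ t)" "distinct [a, b, c]"
  shows "a \<notin> set (x @ y @ z @ t)" "b \<notin> set (x @ y @ z @ t)" "c \<notin> set (x @ y @ z @ t)"
  using nanoword_count[OF assms(1), of a] nanoword_count[OF assms(1), of b]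
    nanoword_count[OF assms(1), of c] assms(2)
  by (auto simp: count_list_0_iff[symmetric])

lemma H1_reduct_nanoword:
  assumes "is_nanoword (A, p, x @ [a, a] @ y)"
  shows "is_nanoword (A - {a}, p, x @ y)"
proof -
  have "count_list (x @ y) c = 2" if "c \<in> A - {a}" for c
    using nanoword_count[OF assms, of c] nanoword_set[OF assms] that by auto
  moreover have "set (x @ y) \<subseteq> A - {a}"
    using nanoword_set[OF assms] H1_letter_fresh[OF assms] by auto
  moreover have "finite A"
    using assms by (simp add: is_nanoword_def)
  ultimately show ?thesis
    by (simp add: is_nanoword_def)
qed

lemma nw_iso_obtain_map:
  assumes "is_nanoword (A, p, w)" "nw_iso (A, p, w) (B, q, v)"
  obtains h where "inj_on h (set w)" "\<And>u. u \<in> set w \<Longrightarrow> q (h u) = p u" "v = map h w"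
  using assms unfolding nw_iso_def by (auto simp: nanoword_set dest: bij_betw_imp_inj_on)

lemma hstep_imp_homotopic: "hstep \<tau> n m \<Longrightarrow> homotopic \<tau> n m"
  unfolding homotopic_def by (simp add: r_into_rtranclp)

lemma hstep_imp_homotopic_rev: "hstep \<tau> m n \<Longrightarrow> homotopic \<tau> n m"
  unfolding homotopic_def by (simp add: r_into_rtranclp)

lemma homotopic_trans [trans]: "homotopic \<tau> n m \<Longrightarrow> homotopic \<tau> m k \<Longrightarrow> homotopic \<tau> n k"
  unfolding homotopic_def by simp

lemma homotopic_sym: "homotopic \<tau> n m \<Longrightarrow> homotopic \<tau> m n"
  unfolding homotopic_def by (metis rtranclp_symclp_sym)

lemma homotopic_image:
  assumes "\<And>n m. hstep \<tau> n m \<Longrightarrow> hstep \<tau> (F n) (F m)" and "homotopic \<tau> n m"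
  shows "homotopic \<tau> (F n) (F m)"
  using assms(2) unfolding homotopic_def
proof (induction rule: rtranclp_induct)
  case (step y z)
  from \<open>symclp (hstep \<tau>) y z\<close> have "symclp (hstep \<tau>) (F y) (F z)"
    by (auto elim!: symclpE dest: assms(1))
  with step.IH show ?case by simp
qed simp

lemma homotopy_invariant:
  assumes "\<And>n m. hstep \<tau> n m \<Longrightarrow> I n = I m" and "homotopic \<tau> n m"
  shows "I n = I m"
  using assms(2) unfolding homotopic_def
  by (induction rule: rtranclp_induct) (auto simp: symclp_def dest: assms(1))

lemma hstep_opposite: "hstep \<tau> n m \<Longrightarrow> hstep \<tau> (nw_opposite n) (nw_opposite m)"
proof (induction rule: hstep.induct)
  case (iso n1 n2)
  then show ?case
    by (intro hstep.iso)
       (auto simp: nw_opposite_def nw_iso_def nanoword_rev rev_map[symmetric] split: prod.splits)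
next
  case (H1 A p x a y)
  from nanoword_rev[OF H1] show ?case
    using hstep.H1[where x = "rev y" and y = "rev x"] by (simp add: nw_opposite_def)
next
  case (H2 A p x a b y z)
  from nanoword_rev[OF H2(1)] H2(2) show ?case
    using hstep.H2[where x = "rev z" and z = "rev x" and y = "rev y"] by (simp add: nw_opposite_def)
next
  case (H3 A p x a b y c z t)
  have "hstep \<tau> (A, p, rev t @ [c, b] @ rev z @ [c, a] @ rev y @ [b, a] @ rev x)
                 (A, p, rev t @ [b, c] @ rev z @ [a, c] @ rev y @ [a, b] @ rev x)"
    by (rule hstep.H3) (use nanoword_rev[OF H3(1)] H3(2-) in auto)
  then show ?case by (simp add: nw_opposite_def)
qed

lemma hstep_inverse: "hstep \<tau> n m \<Longrightarrow> hstep \<tau> (nw_inverse \<tau> n) (nw_inverse \<tau> m)"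
proof (induction rule: hstep.induct)
  case (iso n1 n2)
  then show ?case
    by (intro hstep.iso) (auto simp: nw_inverse_def nw_iso_def is_nanoword_def split: prod.splits)
next
  case (H1 A p x a y)
  show ?case
    using hstep.H1[OF nanoword_relabel[OF H1, of "\<tau> \<circ> p"]] by (simp add: nw_inverse_def)
next
  case (H2 A p x a b y z)
  show ?case
    using hstep.H2[OF nanoword_relabel[OF H2(1), of "\<tau> \<circ> p"]] H2(2) by (simp add: nw_inverse_def)
next
  case (H3 A p x a b y c z t)
  show ?case
    using hstep.H3[OF nanoword_relabel[OF H3(1), of "\<tau> \<circ> p"]] H3(2-) by (simp add: nw_inverse_def)
qed

lemma contractible_Nil: "is_nanoword (A, p, []) \<Longrightarrow> contractible \<tau> (A, p, [])"
  unfolding contractible_def empty_nanoword_def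
  by (intro hstep_imp_homotopic hstep.iso) (auto simp: is_nanoword_def nw_iso_def)

lemma contractible_imp_homot_symmetric:
  assumes "contractible \<tau> n"
  shows "homot_symmetric \<tau> n"
proof -
  have "homotopic \<tau> (nw_opposite n) (nw_opposite empty_nanoword)"
    using hstep_opposite assms unfolding contractible_def by (rule homotopic_image)
  then have "homotopic \<tau> (nw_opposite n) empty_nanoword"
    by (simp add: nw_opposite_def empty_nanoword_def)
  then show ?thesis
    using assms unfolding homot_symmetric_def contractible_def
    by (metis homotopic_sym homotopic_trans)
qed

lemma contractible_imp_homot_skew_symmetric:
  assumes "contractible \<tau> n"
  shows "homot_skew_symmetric \<tau> n"
proof -
  have "homotopic \<tau> (nw_opposite (nw_inverse \<tau> n)) (nw_opposite (nw_inverse \<tau> empty_nanoword))"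
    using hstep_opposite[OF hstep_inverse] assms unfolding contractible_def
    by (rule homotopic_image)
  moreover have "contractible \<tau> (nw_opposite (nw_inverse \<tau> empty_nanoword))"
    by (simp add: nw_opposite_def nw_inverse_def empty_nanoword_def is_nanoword_def contractible_Nil)
  ultimately show ?thesis
    using assms unfolding homot_skew_symmetric_def contractible_def
    by (metis homotopic_sym homotopic_trans)
qed

lemma symmetric_imp_homot_symmetric:
  assumes "is_nanoword n" "nw_symmetric n"
  shows "homot_symmetric \<tau> n"
  using assms unfolding homot_symmetric_def nw_symmetric_def
  by (intro hstep_imp_homotopic hstep.iso)
     (auto simp: nw_opposite_def nanoword_rev split: prod.splits)

lemma contractible_H1_reduct:
  assumes "is_nanoword (A, p, x @ [a, a] @ y)" "contractible \<tau> (A - {a}, p, x @ y)"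
  shows "contractible \<tau> (A, p, x @ [a, a] @ y)"
  using hstep.H1[OF assms(1)] assms(2) unfolding contractible_def
  by (blast intro: hstep_imp_homotopic homotopic_trans)

lemma square_word_contractible:
  assumes "is_nanoword (A, p, [u, u])"
  shows "contractible \<tau> (A, p, [u, u])"
proof -
  have "is_nanoword (A - {u}, p, [])"
    using H1_reduct_nanoword[of A p "[]" u "[]"] assms by simp
  then have "contractible \<tau> (A - {u}, p, [])"
    by (rule contractible_Nil)
  with assms show ?thesis
    using contractible_H1_reduct[of A p "[]" u "[]" \<tau>] by simp
qed

lemma contractible_H1_square:
  assumes "is_nanoword (A, p, x @ [a, a] @ y)" "x @ y = [b, b]"
  shows "contractible \<tau> (A, p, x @ [a, a] @ y)"
proof -
  have "is_nanoword (A - {a}, p, [b, b])"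
    using H1_reduct_nanoword[OF assms(1)] assms(2) by simp
  then have "contractible \<tau> (A - {a}, p, x @ y)"
    unfolding assms(2) by (rule square_word_contractible)
  with assms(1) show ?thesis
    by (rule contractible_H1_reduct)
qed

section \<open>Linked pairs of letters\<close>

definition linked :: "nat list \<Rightarrow> nat \<Rightarrow> nat \<Rightarrow> bool" where
  "linked w u v \<longleftrightarrow> filter (\<lambda>c. c = u \<or> c = v) w = [u, v, u, v]"

lemma linked_imp_mem: "linked w u v \<Longrightarrow> u \<in> set w \<and> v \<in> set w"
  unfolding linked_def by (metis filter_is_subset insert_subset list.set(2))

lemma linked_map:
  assumes "inj_on h (insert u (insert v (set w)))"
  shows "linked (map h w) (h u) (h v) \<longleftrightarrow> linked w u v"
proof -
  have "filter (\<lambda>c. h c = h u \<or> h c = h v) w = filter (\<lambda>c. c = u \<or> c = v) w"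
    using assms by (intro filter_cong refl) (metis inj_on_eq_iff insertCI)
  then have "filter (\<lambda>c. c = h u \<or> c = h v) (map h w) = map h (filter (\<lambda>c. c = u \<or> c = v) w)"
    by (simp add: filter_map o_def)
  moreover have "map h (filter (\<lambda>c. c = u \<or> c = v) w) = map h [u, v, u, v]
      \<longleftrightarrow> filter (\<lambda>c. c = u \<or> c = v) w = [u, v, u, v]"
    by (rule inj_on_map_eq_map, rule inj_on_subset[OF assms]) auto
  ultimately show ?thesis by (simp add: linked_def)
qed

lemma linked_swap_adjacent:
  assumes "\<not> (a \<in> {u, v} \<and> b \<in> {u, v})"
  shows "linked (x @ [a, b] @ y) u v \<longleftrightarrow> linked (x @ [b, a] @ y) u v"
  using assms by (auto simp: linked_def)

lemma square_not_abab: "u \<noteq> v \<Longrightarrow> xs @ [c, c] @ ys \<noteq> [u, v, u, v]"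
  by (auto simp: append_eq_Cons_conv Cons_eq_append_conv)

lemma linked_H1:
  assumes "a \<notin> set (x @ y)"
  shows "linked (x @ [a, a] @ y) = linked (x @ y)"
proof (intro ext)
  fix u v
  show "linked (x @ [a, a] @ y) u v = linked (x @ y) u v"
  proof (cases "a = u \<or> a = v")
    case True
    have "filter (\<lambda>c. c = a) x = []" "filter (\<lambda>c. c = a) y = []"
      using assms by (auto simp: filter_empty_conv)
    then have "\<not> linked (x @ [a, a] @ y) u v"
      using True square_not_abab[of u v] by (cases "u = v") (auto simp: linked_def)
    moreover have "\<not> linked (x @ y) u v"
      using True assms by (auto dest: linked_imp_mem)
    ultimately show ?thesis
      by simp
  qed (simp add: linked_def)
qed

lemma linked_H2:
  assumes "a \<noteq> b" "a \<notin> set (x @ y @ z)" "b \<notin> set (x @ y @ z)"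
  defines "W \<equiv> x @ [a, b] @ y @ [b, a] @ z"
  shows linked_H2_other: "u \<notin> {a, b} \<Longrightarrow> v \<notin> {a, b} \<Longrightarrow> linked W u v \<longleftrightarrow> linked (x @ y @ z) u v"
    and linked_H2_pair: "u \<in> {a, b} \<Longrightarrow> v \<in> {a, b} \<Longrightarrow> \<not> linked W u v"
    and linked_H2_transpose:
      "linked W (Transposition.transpose a b u) (Transposition.transpose a b v) \<longleftrightarrow> linked W u v"
proof -
  show "u \<notin> {a, b} \<Longrightarrow> v \<notin> {a, b} \<Longrightarrow> linked W u v \<longleftrightarrow> linked (x @ y @ z) u v"
    by (auto simp: W_def linked_def)
  show pair: "\<not> linked W u v" if "u \<in> {a, b}" "v \<in> {a, b}" for u v
  proof -
    have "filter (\<lambda>c. c = u \<or> c = v) s = []" if "s \<in> {x, y, z}" for s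
      using that \<open>u \<in> {a, b}\<close> \<open>v \<in> {a, b}\<close> assms(2,3) by (auto simp: filter_empty_conv)
    then show ?thesis
      using that assms(1) by (auto simp: W_def linked_def)
  qed
  let ?\<sigma> = "Transposition.transpose a b"
  have map_W: "map ?\<sigma> W = x @ [b, a] @ y @ [a, b] @ z"
    using assms(2,3) by (auto simp: W_def intro!: map_idI transpose_apply_other)
  show "linked W (?\<sigma> u) (?\<sigma> v) \<longleftrightarrow> linked W u v"
  proof (cases "u \<in> {a, b} \<and> v \<in> {a, b}")
    case True
    then show ?thesis using pair by auto
  next
    case False
    then have no_ab: "\<not> (a \<in> {?\<sigma> u, ?\<sigma> v} \<and> b \<in> {?\<sigma> u, ?\<sigma> v})"
      and no_ba: "\<not> (b \<in> {?\<sigma> u, ?\<sigma> v} \<and> a \<in> {?\<sigma> u, ?\<sigma> v})"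
      using assms(1) by (auto simp: transpose_eq_iff)
    have "linked W (?\<sigma> u) (?\<sigma> v) \<longleftrightarrow> linked (x @ [b, a] @ (y @ [b, a] @ z)) (?\<sigma> u) (?\<sigma> v)"
      unfolding W_def by (rule linked_swap_adjacent[OF no_ab])
    also have "\<dots> \<longleftrightarrow> linked ((x @ [b, a] @ y) @ [a, b] @ z) (?\<sigma> u) (?\<sigma> v)"
      using linked_swap_adjacent[OF no_ba, of "x @ [b, a] @ y" z] by simp
    also have "\<dots> \<longleftrightarrow> linked (map ?\<sigma> W) (?\<sigma> u) (?\<sigma> v)"
      by (simp add: map_W)
    also have "\<dots> \<longleftrightarrow> linked W u v"
      by (rule linked_map) (rule inj_on_transpose)
    finally show ?thesis .
  qed
qed

lemma linked_H3:
  assumes "\<not> (u \<in> {a, b, c} \<and> v \<in> {a, b, c})"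
  shows "linked (x @ [a, b] @ y @ [a, c] @ z @ [b, c] @ t) u v
     \<longleftrightarrow> linked (x @ [b, a] @ y @ [c, a] @ z @ [c, b] @ t) u v"
  using assms by (auto simp: linked_def)

lemma linked_H3_triple:
  assumes "distinct [a, b, c]"
    and "a \<notin> set (x @ y @ z @ t)" "b \<notin> set (x @ y @ z @ t)" "c \<notin> set (x @ y @ z @ t)"
    and "u \<in> {a, b, c}" "v \<in> {a, b, c}"
  shows "linked (x @ [a, b] @ y @ [a, c] @ z @ [b, c] @ t) u v \<longleftrightarrow> (u, v) \<in> {(a, b), (b, c)}"
    and "linked (x @ [b, a] @ y @ [c, a] @ z @ [c, b] @ t) u v \<longleftrightarrow> (u, v) = (a, c)"
proof -
  let ?P = "\<lambda>e. e = u \<or> e = v"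
  have "filter ?P s = []" if "s \<in> {x, y, z, t}" for s
    using that assms(2-6) unfolding filter_empty_conv by fastforce
  then have "linked (x @ [a, b] @ y @ [a, c] @ z @ [b, c] @ t) u v
      \<longleftrightarrow> filter ?P [a, b, a, c, b, c] = [u, v, u, v]"
    and "linked (x @ [b, a] @ y @ [c, a] @ z @ [c, b] @ t) u v
      \<longleftrightarrow> filter ?P [b, a, c, a, c, b] = [u, v, u, v]"
    by (simp_all add: linked_def)
  moreover have "filter ?P [a, b, a, c, b, c] = [u, v, u, v] \<longleftrightarrow> (u, v) \<in> {(a, b), (b, c)}"
    and "filter ?P [b, a, c, a, c, b] = [u, v, u, v] \<longleftrightarrow> (u, v) = (a, c)"
    using assms(1,5,6) by auto
  ultimately show
      "linked (x @ [a, b] @ y @ [a, c] @ z @ [b, c] @ t) u v \<longleftrightarrow> (u, v) \<in> {(a, b), (b, c)}"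
    and "linked (x @ [b, a] @ y @ [c, a] @ z @ [c, b] @ t) u v \<longleftrightarrow> (u, v) = (a, c)"
    by simp_all
qed

lemma linked_abab:
  assumes "u \<noteq> v"
  shows "linked [u, v, u, v] x y \<longleftrightarrow> x = u \<and> y = v"
proof
  assume xy: "linked [u, v, u, v] x y"
  then have "x \<in> {u, v}" "y \<in> {u, v}"
    by (auto dest: linked_imp_mem)
  with xy assms show "x = u \<and> y = v"
    by (auto simp: linked_def)
qed (simp add: linked_def)

section \<open>The parity of linked pairs\<close>

definition linked_pairs :: "'a set \<Rightarrow> 'a set \<Rightarrow> (nat \<Rightarrow> 'a) \<Rightarrow> nat list \<Rightarrow> (nat \<times> nat) set" where
  "linked_pairs S T p w = {(u, v). linked w u v \<and> p u \<in> S \<and> p v \<in> T}"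

definition link_parity :: "'a set \<Rightarrow> 'a set \<Rightarrow> (nat \<Rightarrow> 'a) \<Rightarrow> nat list \<Rightarrow> bit" where
  "link_parity S T p w = of_nat (card (linked_pairs S T p w))"

lemma linked_pairs_subset: "linked_pairs S T p w \<subseteq> set w \<times> set w"
  by (auto simp: linked_pairs_def dest: linked_imp_mem)

lemma finite_linked_pairs: "finite (linked_pairs S T p w)"
  using linked_pairs_subset by (rule finite_subset) simp

lemma link_parity_map:
  assumes "inj_on h (set w)" "\<And>u. u \<in> set w \<Longrightarrow> q (h u) = p u"
  shows "link_parity S T q (map h w) = link_parity S T p w"
proof -
  have linked_h: "linked (map h w) (h u) (h v) \<longleftrightarrow> linked w u v" if "u \<in> set w" "v \<in> set w" for u v
    using linked_map[of h u v w] assms(1) that by (simp add: insert_absorb)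
  have "linked_pairs S T q (map h w) = map_prod h h ` linked_pairs S T p w"
  proof (intro equalityI subsetI)
    fix e assume e: "e \<in> linked_pairs S T q (map h w)"
    then obtain u v where uv: "e = (h u, h v)" "u \<in> set w" "v \<in> set w"
      using linked_pairs_subset[of S T q "map h w"] by auto
    with e have "(u, v) \<in> linked_pairs S T p w"
      by (simp add: linked_pairs_def linked_h assms(2))
    with uv show "e \<in> map_prod h h ` linked_pairs S T p w"
      by (simp add: rev_image_eqI)
  next
    fix e assume "e \<in> map_prod h h ` linked_pairs S T p w"
    then obtain u v where uv: "e = (h u, h v)" "(u, v) \<in> linked_pairs S T p w"
      by auto
    moreover from uv(2) have "u \<in> set w" "v \<in> set w"
      using linked_pairs_subset by blast+
    ultimately show "e \<in> linked_pairs S T q (map h w)"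
      by (simp add: linked_pairs_def linked_h assms(2))
  qed
  moreover have "inj_on (map_prod h h) (linked_pairs S T p w)"
    using map_prod_inj_on[OF assms(1) assms(1)] linked_pairs_subset by (rule inj_on_subset)
  ultimately show ?thesis
    by (simp add: link_parity_def card_image)
qed

lemma link_parity_H1:
  assumes "a \<notin> set (x @ y)"
  shows "link_parity S T p (x @ [a, a] @ y) = link_parity S T p (x @ y)"
  using linked_H1[OF assms] by (simp add: link_parity_def linked_pairs_def)

lemma card_fixpoint_free_involution_eq_0_mod_2:
  assumes "\<And>e. e \<in> E \<Longrightarrow> h e \<in> E" "\<And>e. e \<in> E \<Longrightarrow> h (h e) = e" "\<And>e. e \<in> E \<Longrightarrow> h e \<noteq> e"
  shows "of_nat (card E) = (0 :: bit)"
  using sum_involution_eq_0[of E "\<lambda>_. 1 :: bit" h] assms by simp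

(* Transposing a and b is a fixed-point-free involution of the linked pairs that meet {a, b},
   so these pairs do not contribute modulo 2. *)
lemma link_parity_H2:
  assumes "a \<noteq> b" "a \<notin> set (x @ y @ z)" "b \<notin> set (x @ y @ z)"
    and S: "p a \<in> S \<longleftrightarrow> p b \<in> S" and T: "p a \<in> T \<longleftrightarrow> p b \<in> T"
  shows "link_parity S T p (x @ [a, b] @ y @ [b, a] @ z) = link_parity S T p (x @ y @ z)"
proof -
  define W where "W = x @ [a, b] @ y @ [b, a] @ z"
  let ?\<sigma> = "Transposition.transpose a b"
  let ?L = "linked_pairs S T p (x @ y @ z)"
  define E where "E = {(u, v) \<in> linked_pairs S T p W. u \<in> {a, b} \<or> v \<in> {a, b}}"
  have "linked W u v \<longleftrightarrow> linked (x @ y @ z) u v" if "u \<notin> {a, b}" "v \<notin> {a, b}" for u v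
    using linked_H2_other[OF assms(1-3) that] by (simp add: W_def)
  moreover have "u \<notin> {a, b} \<and> v \<notin> {a, b}" if "(u, v) \<in> ?L" for u v
    using that linked_pairs_subset assms(2,3) by blast
  ultimately have "linked_pairs S T p W = ?L \<union> E"
    by (auto simp: E_def linked_pairs_def)
  moreover have "?L \<inter> E = {}"
    using linked_pairs_subset[of S T p "x @ y @ z"] assms(2,3) by (auto simp: E_def)
  moreover have "finite E"
    by (rule finite_subset[OF _ finite_linked_pairs]) (auto simp: E_def)
  moreover have "of_nat (card E) = (0 :: bit)"
  proof (rule card_fixpoint_free_involution_eq_0_mod_2[where h = "map_prod ?\<sigma> ?\<sigma>"])
    have S\<sigma>: "p (?\<sigma> c) \<in> S \<longleftrightarrow> p c \<in> S" and T\<sigma>: "p (?\<sigma> c) \<in> T \<longleftrightarrow> p c \<in> T" for c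
      using S T by (auto simp: Transposition.transpose_def)
    fix e assume "e \<in> E"
    then obtain u v where e: "e = (u, v)" "linked W u v" "p u \<in> S" "p v \<in> T"
      "u \<in> {a, b} \<or> v \<in> {a, b}"
      by (auto simp: E_def linked_pairs_def)
    then show "map_prod ?\<sigma> ?\<sigma> e \<in> E"
      using linked_H2_transpose[OF assms(1-3)] S\<sigma> T\<sigma>
      by (auto simp: E_def W_def linked_pairs_def)
    show "map_prod ?\<sigma> ?\<sigma> (map_prod ?\<sigma> ?\<sigma> e) = e"
      by (simp add: e)
    show "map_prod ?\<sigma> ?\<sigma> e \<noteq> e"
      using e(5) assms(1) by (auto simp: e)
  qed
  ultimately show ?thesis
    by (simp add: link_parity_def W_def card_Un_disjoint finite_linked_pairs)
qed

lemma link_parity_H3: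
  assumes "p a = p b" "p b = p c" "S \<inter> T = {}"
  shows "link_parity S T p (x @ [a, b] @ y @ [a, c] @ z @ [b, c] @ t)
       = link_parity S T p (x @ [b, a] @ y @ [c, a] @ z @ [c, b] @ t)"
proof -
  have "linked (x @ [a, b] @ y @ [a, c] @ z @ [b, c] @ t) u v \<and> p u \<in> S \<and> p v \<in> T
    \<longleftrightarrow> linked (x @ [b, a] @ y @ [c, a] @ z @ [c, b] @ t) u v \<and> p u \<in> S \<and> p v \<in> T" for u v
  proof (cases "u \<in> {a, b, c} \<and> v \<in> {a, b, c}")
    case True
    with assms show ?thesis by auto
  next
    case False
    then show ?thesis
      using linked_H3[where x = x and y = y and z = z and t = t, OF False] by blast
  qed
  then show ?thesis
    by (simp add: link_parity_def linked_pairs_def)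
qed

lemma hstep_link_parity:
  assumes S: "\<And>x. \<tau> x \<in> S \<longleftrightarrow> x \<in> S" and T: "\<And>x. \<tau> x \<in> T \<longleftrightarrow> x \<in> T" and "S \<inter> T = {}"
  shows "hstep \<tau> n m \<Longrightarrow>
    (case n of (A, p, w) \<Rightarrow> link_parity S T p w) = (case m of (A, p, w) \<Rightarrow> link_parity S T p w)"
proof (induction rule: hstep.induct)
  case (iso n1 n2)
  obtain A p w B q v where n: "n1 = (A, p, w)" "n2 = (B, q, v)"
    by (cases n1, cases n2) auto
  with iso obtain h where "inj_on h (set w)" "\<And>u. u \<in> set w \<Longrightarrow> q (h u) = p u" "v = map h w"
    by (metis nw_iso_obtain_map)
  then show ?case
    by (simp add: n link_parity_map)
next
  case (H1 A p x a y)
  show ?case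
    using link_parity_H1[OF H1_letter_fresh[OF H1]] by simp
next
  case (H2 A p x a b y z)
  have "p a \<in> S \<longleftrightarrow> p b \<in> S" "p a \<in> T \<longleftrightarrow> p b \<in> T"
    using H2(2) S T by auto
  then show ?case
    using link_parity_H2[OF H2_letters_fresh[OF H2(1)]] by simp
next
  case (H3 A p x a b y c z t)
  then show ?case
    using link_parity_H3[OF H3(3,4) assms(3)] by simp
qed

lemma homotopic_link_parity:
  assumes "\<And>x. \<tau> x \<in> S \<longleftrightarrow> x \<in> S" "\<And>x. \<tau> x \<in> T \<longleftrightarrow> x \<in> T" "S \<inter> T = {}"
    and "homotopic \<tau> (A, p, w) (B, q, v)"
  shows "link_parity S T p w = link_parity S T q v"
  using homotopy_invariant[where I = "\<lambda>(A, p, w). link_parity S T p w",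
      OF hstep_link_parity[OF assms(1-3)] assms(4)]
  by simp

lemma link_parity_abab:
  assumes "u \<noteq> v"
  shows "link_parity S T p [u, v, u, v] = (if p u \<in> S \<and> p v \<in> T then 1 else 0)"
proof -
  from assms have "linked_pairs S T p [u, v, u, v] = (if p u \<in> S \<and> p v \<in> T then {(u, v)} else {})"
    by (auto simp: linked_pairs_def linked_abab)
  then show ?thesis
    by (simp add: link_parity_def)
qed

section \<open>The index sum\<close>

definition link_sign :: "nat list \<Rightarrow> nat \<Rightarrow> nat \<Rightarrow> int" where
  "link_sign w u v = (if linked w u v then 1 else if linked w v u then -1 else 0)"

definition link_index :: "('a \<Rightarrow> int) \<Rightarrow> (nat \<Rightarrow> 'a) \<Rightarrow> nat list \<Rightarrow> nat \<Rightarrow> int" where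
  "link_index g p w u = (\<Sum>v\<in>set w. link_sign w u v * g (p v))"

definition index_sum :: "('a \<Rightarrow> int) \<Rightarrow> ('a \<Rightarrow> int) \<Rightarrow> (int \<Rightarrow> int) \<Rightarrow> (nat \<Rightarrow> 'a) \<Rightarrow> nat list \<Rightarrow> int" where
  "index_sum f g \<phi> p w = (\<Sum>u\<in>set w. f (p u) * \<phi> (link_index g p w u))"

lemma link_sign_not_mem:
  shows "u \<notin> set w \<Longrightarrow> link_sign w u v = 0" and "v \<notin> set w \<Longrightarrow> link_sign w u v = 0"
  by (auto simp: link_sign_def dest: linked_imp_mem)

lemma link_index_not_mem: "u \<notin> set w \<Longrightarrow> link_index g p w u = 0"
  by (simp add: link_index_def link_sign_not_mem)

lemma link_sign_map:
  assumes "inj_on h (set w)" "u \<in> set w" "v \<in> set w"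
  shows "link_sign (map h w) (h u) (h v) = link_sign w u v"
  using linked_map[of h u v w] linked_map[of h v u w] assms
  by (simp add: link_sign_def insert_absorb)

lemma index_sum_map:
  assumes "inj_on h (set w)" "\<And>u. u \<in> set w \<Longrightarrow> q (h u) = p u"
  shows "index_sum f g \<phi> q (map h w) = index_sum f g \<phi> p w"
proof -
  have "link_index g q (map h w) (h u) = link_index g p w u" if "u \<in> set w" for u
    using assms that by (simp add: link_index_def sum.reindex link_sign_map)
  with assms show ?thesis
    by (simp add: index_sum_def sum.reindex)
qed

lemma link_index_H1:
  assumes "a \<notin> set (x @ y)"
  shows "link_index g p (x @ [a, a] @ y) = link_index g p (x @ y)"
proof
  fix u
  have "link_sign (x @ [a, a] @ y) = link_sign (x @ y)"
    using linked_H1[OF assms] by (simp add: link_sign_def fun_eq_iff)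
  moreover have "link_sign (x @ y) u a = 0"
    using assms by (rule link_sign_not_mem)
  ultimately show "link_index g p (x @ [a, a] @ y) u = link_index g p (x @ y) u"
    using assms by (simp add: link_index_def)
qed

lemma index_sum_H1:
  assumes "a \<notin> set (x @ y)" "\<phi> 0 = 0"
  shows "index_sum f g \<phi> p (x @ [a, a] @ y) = index_sum f g \<phi> p (x @ y)"
  unfolding index_sum_def link_index_H1[OF assms(1)] using assms by (simp add: link_index_not_mem)

lemma index_sum_H2:
  assumes "a \<noteq> b" "a \<notin> set (x @ y @ z)" "b \<notin> set (x @ y @ z)"
    and f: "f (p b) = - f (p a)" and g: "g (p b) = - g (p a)"
  shows "index_sum f g \<phi> p (x @ [a, b] @ y @ [b, a] @ z) = index_sum f g \<phi> p (x @ y @ z)"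
proof -
  define W where "W = x @ [a, b] @ y @ [b, a] @ z"
  let ?U = "set (x @ y @ z)"
  have split: "(\<Sum>v\<in>set W. F v) = F a + F b + (\<Sum>v\<in>?U. F v)" for F :: "nat \<Rightarrow> int"
  proof -
    have "set W = insert a (insert b ?U)"
      by (auto simp: W_def)
    with assms(1-3) show ?thesis
      by (simp add: add.assoc)
  qed
  have sign_U: "link_sign W u v = link_sign (x @ y @ z) u v" if "u \<in> ?U" "v \<in> ?U" for u v
  proof -
    have "u \<notin> {a, b}" "v \<notin> {a, b}"
      using that assms(2,3) by auto
    then show ?thesis
      using linked_H2_other[OF assms(1-3)] unfolding W_def link_sign_def by simp
  qed
  have sign_ab: "link_sign W u v = 0" if "u \<in> {a, b}" "v \<in> {a, b}" for u v
    using linked_H2_pair[OF assms(1-3)] that unfolding W_def link_sign_def by simp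
  have sign_swap: "link_sign W u b = link_sign W u a" "link_sign W b u = link_sign W a u"
    if "u \<in> ?U" for u
  proof -
    have "Transposition.transpose a b u = u"
      using that assms(2,3) by (metis transpose_apply_other)
    then show "link_sign W u b = link_sign W u a" "link_sign W b u = link_sign W a u"
      using linked_H2_transpose[OF assms(1-3), of u a] linked_H2_transpose[OF assms(1-3), of a u]
      unfolding W_def link_sign_def by simp_all
  qed
  have index_U: "link_index g p W u = link_index g p (x @ y @ z) u" if "u \<in> ?U" for u
  proof -
    have "link_index g p W u = (\<Sum>v\<in>?U. link_sign W u v * g (p v))"
      unfolding link_index_def split using sign_swap(1)[OF that] g by simp
    also have "\<dots> = link_index g p (x @ y @ z) u"
      unfolding link_index_def using sign_U[OF that] by simp
    finally show ?thesis .
  qed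
  have index_ab: "link_index g p W b = link_index g p W a"
    unfolding link_index_def split using sign_ab sign_swap(2) by simp
  show ?thesis
    unfolding index_sum_def W_def[symmetric] split using index_U index_ab f by simp
qed

lemma index_sum_H3:
  assumes "distinct [a, b, c]"
    and fresh: "a \<notin> set (x @ y @ z @ t)" "b \<notin> set (x @ y @ z @ t)" "c \<notin> set (x @ y @ z @ t)"
    and "p a = p b" "p b = p c"
  shows "index_sum f g \<phi> p (x @ [a, b] @ y @ [a, c] @ z @ [b, c] @ t)
       = index_sum f g \<phi> p (x @ [b, a] @ y @ [c, a] @ z @ [c, b] @ t)"
proof -
  define W where "W = x @ [a, b] @ y @ [a, c] @ z @ [b, c] @ t"
  define W' where "W' = x @ [b, a] @ y @ [c, a] @ z @ [c, b] @ t"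
  let ?D = "{a, b, c}" and ?U = "set (x @ y @ z @ t)"
  have set_W: "set W = ?D \<union> ?U" "set W' = ?D \<union> ?U"
    by (auto simp: W_def W'_def)
  have split: "(\<Sum>v\<in>?D \<union> ?U. F v) = (\<Sum>v\<in>?D. F v) + (\<Sum>v\<in>?U. F v)" for F :: "nat \<Rightarrow> int"
    using fresh by (intro sum.union_disjoint) auto
  have sign_U: "link_sign W u v = link_sign W' u v" if "v \<in> ?U" for u v
  proof -
    have "v \<notin> ?D"
      using that fresh by auto
    then show ?thesis
      using linked_H3[of u a b c v] linked_H3[of v a b c u]
      unfolding W_def W'_def link_sign_def by simp
  qed
  have sign_D: "(\<Sum>v\<in>?D. link_sign W u v) = (\<Sum>v\<in>?D. link_sign W' u v)" for u
  proof (cases "u \<in> ?D")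
    case True
    have sum_D: "(\<Sum>v\<in>?D. F v) = F a + F b + F c" for F :: "nat \<Rightarrow> int"
      using assms(1) by (simp add: add.assoc)
    from True consider "u = a" | "u = b" | "u = c"
      by blast
    then show ?thesis
      unfolding sum_D W_def W'_def link_sign_def using assms(1) linked_H3_triple[OF assms(1-4)]
      by cases simp_all
  next
    case False
    then have "link_sign W u v = link_sign W' u v" for v
      using linked_H3[of u a b c v] linked_H3[of v a b c u]
      unfolding W_def W'_def link_sign_def by simp
    then show ?thesis
      by simp
  qed
  have index: "link_index g p W u = link_index g p W' u" for u
  proof -
    have "(\<Sum>v\<in>?D. link_sign w u v * g (p v)) = (\<Sum>v\<in>?D. link_sign w u v) * g (p a)" for w
      using assms(5,6) by (auto simp: sum_distrib_right intro!: sum.cong)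
    moreover have "(\<Sum>v\<in>?U. link_sign W u v * g (p v)) = (\<Sum>v\<in>?U. link_sign W' u v * g (p v))"
      by (intro sum.cong refl) (simp add: sign_U)
    ultimately show ?thesis
      unfolding link_index_def set_W split using sign_D[of u] by simp
  qed
  show ?thesis
    unfolding index_sum_def W_def[symmetric] W'_def[symmetric] set_W index ..
qed

lemma hstep_index_sum:
  assumes f: "\<And>x. f (\<tau> x) = - f x" and g: "\<And>x. g (\<tau> x) = - g x" and "\<phi> 0 = 0"
  shows "hstep \<tau> n m \<Longrightarrow>
    (case n of (A, p, w) \<Rightarrow> index_sum f g \<phi> p w) = (case m of (A, p, w) \<Rightarrow> index_sum f g \<phi> p w)"
proof (induction rule: hstep.induct)
  case (iso n1 n2)
  obtain A p w B q v where n: "n1 = (A, p, w)" "n2 = (B, q, v)"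
    by (cases n1, cases n2) auto
  with iso obtain h where "inj_on h (set w)" "\<And>u. u \<in> set w \<Longrightarrow> q (h u) = p u" "v = map h w"
    by (metis nw_iso_obtain_map)
  then show ?case
    by (simp add: n index_sum_map)
next
  case (H1 A p x a y)
  show ?case
    using index_sum_H1[where \<phi> = \<phi>, OF H1_letter_fresh[OF H1] assms(3)] by simp
next
  case (H2 A p x a b y z)
  have "f (p b) = - f (p a)" "g (p b) = - g (p a)"
    using H2(2) f g by simp_all
  then show ?case
    using index_sum_H2[OF H2_letters_fresh[OF H2(1)]] by simp
next
  case (H3 A p x a b y c z t)
  show ?case
    using index_sum_H3[OF H3(2) H3_letters_fresh[OF H3(1,2)] H3(3,4)] by simp
qed

lemma homotopic_index_sum:
  assumes "\<And>x. f (\<tau> x) = - f x" "\<And>x. g (\<tau> x) = - g x" "\<phi> 0 = 0"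
    and "homotopic \<tau> (A, p, w) (B, q, v)"
  shows "index_sum f g \<phi> p w = index_sum f g \<phi> q v"
  using homotopy_invariant[where I = "\<lambda>(A, p, w). index_sum f g \<phi> p w",
      OF hstep_index_sum[where f = f and g = g and \<phi> = \<phi>, OF assms(1-3)] assms(4)]
  by simp

lemma index_sum_abab:
  assumes "u \<noteq> v"
  shows "index_sum f g \<phi> p [u, v, u, v] = f (p u) * \<phi> (g (p v)) + f (p v) * \<phi> (- g (p u))"
proof -
  have "link_sign [u, v, u, v] u u = 0" "link_sign [u, v, u, v] u v = 1"
    "link_sign [u, v, u, v] v u = -1" "link_sign [u, v, u, v] v v = 0"
    using assms by (simp_all add: link_sign_def linked_abab)
  moreover have "set [u, v, u, v] = {u, v}"
    by auto
  ultimately show ?thesis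
    using assms by (simp add: index_sum_def link_index_def)
qed

section \<open>Nanowords of length at most four\<close>

lemma nanoword_length_le_4_cases:
  assumes "is_nanoword (A, p, w)" "length w \<le> 4"
  obtains "w = []" | u where "w = [u, u]" | u v where "w = [u, u, v, v]"
    | u v where "w = [u, v, v, u]" | u v where "u \<noteq> v" "w = [u, v, u, v]"
proof -
  have count: "count_list w u = 2" if "u \<in> set w" for u
    using nanoword_count[OF assms(1) that] .
  have "length w = (\<Sum>u\<in>set w. count_list w u)"
    by (simp add: sum_count_set)
  also have "\<dots> = 2 * card (set w)"
    using count by simp
  finally have "length w = 0 \<or> length w = 2 \<or> length w = 4"
    using assms(2) by presburger
  then consider "w = []" | a b where "w = [a, b]" | a b c d where "w = [a, b, c, d]"
    by (auto simp: length_Suc_conv numeral_eq_Suc)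
  then show ?thesis
  proof cases
    case (2 a b)
    then show ?thesis
      using count[of a] that(2) by (auto split: if_splits)
  next
    case (3 a b c d)
    then show ?thesis
      using count[of a] count[of b] count[of c] that(3-5) by (auto split: if_splits)
  qed (fact that(1))
qed

(* Two inverse H2 moves and an H3 move lead to a word that collapses along other letter pairs. *)
lemma abab_01_contractible:
  fixes \<tau> :: "'a \<Rightarrow> 'a" and a :: 'a
  assumes "\<And>x. \<tau> (\<tau> x) = x"
  defines "q \<equiv> \<lambda>i::nat. if even i then a else \<tau> a"
  shows "contractible \<tau> ({0, 1}, q, [0, 1, 0, 1])"
proof -
  note simps = q_def is_nanoword_def insert_Diff_if assms(1)
  have "homotopic \<tau> ({0, 1}, q, [0, 1, 0, 1]) ({0, 1, 2, 3}, q, [2, 3, 0, 1, 3, 2, 0, 1])"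
    by (rule hstep_imp_homotopic_rev)
      (use hstep.H2[where \<tau> = \<tau> and A = "{0, 1, 2, 3}" and p = q
        and x = "[]" and a = 2 and b = 3 and y = "[0, 1]" and z = "[0, 1]"] in \<open>simp add: simps\<close>)
  also have "homotopic \<tau> \<dots> ({0, 1, 2, 3, 4, 5}, q, [2, 4, 5, 3, 0, 1, 3, 2, 0, 1, 5, 4])"
    by (rule hstep_imp_homotopic_rev)
      (use hstep.H2[where \<tau> = \<tau> and A = "{0, 1, 2, 3, 4, 5}" and p = q
        and x = "[2]" and a = 4 and b = 5 and y = "[3, 0, 1, 3, 2, 0, 1]" and z = "[]"]
       in \<open>simp add: simps\<close>)
  also have "homotopic \<tau> \<dots> ({0, 1, 2, 3, 4, 5}, q, [2, 4, 3, 5, 0, 3, 1, 2, 0, 5, 1, 4])"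
    by (rule hstep_imp_homotopic_rev)
      (use hstep.H3[where \<tau> = \<tau> and A = "{0, 1, 2, 3, 4, 5}" and p = q
        and x = "[2, 4]" and a = 3 and b = 5 and y = "[0]" and c = 1 and z = "[2, 0]" and t = "[4]"]
       in \<open>simp add: simps\<close>)
  also have "homotopic \<tau> \<dots> ({1, 2, 3, 4}, q, [2, 4, 3, 3, 1, 2, 1, 4])"
    by (rule hstep_imp_homotopic)
      (use hstep.H2[where \<tau> = \<tau> and A = "{0, 1, 2, 3, 4, 5}" and p = q
        and x = "[2, 4, 3]" and a = 5 and b = 0 and y = "[3, 1, 2]" and z = "[1, 4]"]
       in \<open>simp add: simps\<close>)
  also have "homotopic \<tau> \<dots> ({1, 2, 4}, q, [2, 4, 1, 2, 1, 4])"
    by (rule hstep_imp_homotopic)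
      (use hstep.H1[where \<tau> = \<tau> and A = "{1, 2, 3, 4}" and p = q
        and x = "[2, 4]" and a = 3 and y = "[1, 2, 1, 4]"] in \<open>simp add: simps\<close>)
  also have "homotopic \<tau> \<dots> ({2}, q, [2, 2])"
    by (rule hstep_imp_homotopic)
      (use hstep.H2[where \<tau> = \<tau> and A = "{1, 2, 4}" and p = q
        and x = "[2]" and a = 4 and b = 1 and y = "[2]" and z = "[]"] in \<open>simp add: simps\<close>)
  finally show ?thesis
    using square_word_contractible[of "{2}" q 2 \<tau>] unfolding contractible_def
    by (auto simp: is_nanoword_def intro: homotopic_trans)
qed

lemma abab_contractible:
  assumes "\<And>x. \<tau> (\<tau> x) = x" "is_nanoword (A, p, [u, v, u, v])" "u \<noteq> v" "p v = \<tau> (p u)"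
  shows "contractible \<tau> (A, p, [u, v, u, v])"
proof -
  define q where "q = (\<lambda>i::nat. if even i then p u else \<tau> (p u))"
  have "nw_iso (A, p, [u, v, u, v]) ({0, 1}, q, [0, 1, 0, 1])"
    unfolding nw_iso_def prod.case
  proof (intro exI conjI)
    let ?h = "\<lambda>c. if c = u then 0 else 1 :: nat"
    show "bij_betw ?h A {0, 1}"
      using nanoword_set[OF assms(2)] assms(3) by (auto simp: bij_betw_def inj_on_def)
    show "\<forall>c\<in>A. q (?h c) = p c"
      using nanoword_set[OF assms(2)] assms(4) by (auto simp: q_def)
    show "map ?h [u, v, u, v] = [0, 1, 0, 1]"
      using assms(3) by simp
  qed
  then have "homotopic \<tau> (A, p, [u, v, u, v]) ({0, 1}, q, [0, 1, 0, 1])"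
    using assms(2) by (intro hstep_imp_homotopic hstep.iso) (auto simp: is_nanoword_def)
  with abab_01_contractible[OF assms(1)] show ?thesis
    unfolding contractible_def q_def by (blast intro: homotopic_trans)
qed

lemma short_nanoword_contractible_or_abab:
  assumes "\<And>x. \<tau> (\<tau> x) = x" "is_nanoword (A, p, w)" "length w \<le> 4"
  obtains "contractible \<tau> (A, p, w)" | u v where "u \<noteq> v" "w = [u, v, u, v]" "p v \<noteq> \<tau> (p u)"
proof (cases rule: nanoword_length_le_4_cases[OF assms(2,3)])
  case 1
  then show ?thesis
    using assms(2) contractible_Nil that(1) by blast
next
  case (2 u)
  then show ?thesis
    using assms(2) square_word_contractible that(1) by blast
next
  case (3 u v)
  then show ?thesis
    using contractible_H1_square[of A p "[]" u "[v, v]" v] assms(2) that(1) by simp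
next
  case (4 u v)
  then show ?thesis
    using contractible_H1_square[of A p "[u]" v "[u]" u] assms(2) that(1) by simp
next
  case (5 u v)
  then show ?thesis
    using abab_contractible[OF assms(1)] assms(2) that by (cases "p v = \<tau> (p u)") auto
qed

lemma abab_symmetric_iff:
  assumes "is_nanoword (A, p, [u, v, u, v])" "u \<noteq> v"
  shows "nw_symmetric (A, p, [u, v, u, v]) \<longleftrightarrow> p u = p v"
proof
  assume "nw_symmetric (A, p, [u, v, u, v])"
  then obtain h where "\<forall>c\<in>A. p (h c) = p c" "map h [u, v, u, v] = [v, u, v, u]"
    unfolding nw_symmetric_def nw_opposite_def nw_iso_def prod.case by auto
  moreover have "u \<in> A"
    using nanoword_set[OF assms(1)] by auto
  ultimately show "p u = p v"
    by force
next
  assume "p u = p v"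
  let ?h = "\<lambda>c. if c = u then v else u"
  have "A = {u, v}"
    using nanoword_set[OF assms(1)] by auto
  then have "bij_betw ?h A A" "\<forall>c\<in>A. p (?h c) = p c"
    using assms(2) \<open>p u = p v\<close> by (auto simp: bij_betw_def inj_on_def)
  moreover have "map ?h [u, v, u, v] = [v, u, v, u]"
    using assms(2) by simp
  ultimately show "nw_symmetric (A, p, [u, v, u, v])"
    unfolding nw_symmetric_def nw_opposite_def nw_iso_def prod.case by auto
qed

lemma abab_link_parity_obstruction:
  assumes inv: "\<And>x. \<tau> (\<tau> x) = x" and "u \<noteq> v" "p v \<noteq> p u" "p v \<noteq> \<tau> (p u)"
  shows "\<not> contractible \<tau> (A, p, [u, v, u, v]) \<and> \<not> homot_skew_symmetric \<tau> (A, p, [u, v, u, v])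
    \<and> \<not> homot_symmetric \<tau> (A, p, [u, v, u, v])"
proof -
  define S where "S = {p u, \<tau> (p u)}"
  define T where "T = {p v, \<tau> (p v)}"
  have closed: "\<tau> x \<in> S \<longleftrightarrow> x \<in> S" "\<tau> x \<in> T \<longleftrightarrow> x \<in> T" for x
    unfolding S_def T_def by (auto simp: involution_eq_iff[OF inv] inv)
  have "p v \<notin> S" "\<tau> (p v) \<notin> S"
    unfolding S_def using assms(3,4) by (auto simp: involution_eq_iff[OF inv] inv)
  then have disjoint: "S \<inter> T = {}"
    by (auto simp: T_def)
  note invariant = homotopic_link_parity[of \<tau> S T, OF closed disjoint]
  have "link_parity S T p [u, v, u, v] = 1"
    using \<open>u \<noteq> v\<close> by (simp add: link_parity_abab S_def T_def)
  moreover have "link_parity S T (\<lambda>_. undefined) [] = 0"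
    by (simp add: link_parity_def linked_pairs_def linked_def)
  moreover have "link_parity S T p [v, u, v, u] = 0" "link_parity S T (\<tau> \<circ> p) [v, u, v, u] = 0"
    using \<open>u \<noteq> v\<close> \<open>p v \<notin> S\<close> \<open>\<tau> (p v) \<notin> S\<close> by (simp_all add: link_parity_abab)
  ultimately show ?thesis
    unfolding contractible_def homot_skew_symmetric_def homot_symmetric_def
      empty_nanoword_def nw_opposite_def nw_inverse_def
    by (auto dest: invariant)
qed

lemma abab_index_sum_obstruction:
  assumes inv: "\<And>x. \<tau> (\<tau> x) = x" and "u \<noteq> v" "p v = p u" "\<tau> (p u) \<noteq> p u"
  shows "\<not> contractible \<tau> (A, p, [u, v, u, v]) \<and> \<not> homot_skew_symmetric \<tau> (A, p, [u, v, u, v])"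
proof -
  define \<chi> :: "'a \<Rightarrow> int" where "\<chi> x = (if x = p u then 1 else if x = \<tau> (p u) then -1 else 0)" for x
  define \<phi> :: "int \<Rightarrow> int" where "\<phi> k = (if k = 1 then 1 else 0)" for k
  have odd: "\<chi> (\<tau> x) = - \<chi> x" for x
    using assms(4) unfolding \<chi>_def by (auto simp: involution_eq_iff[OF inv] inv)
  have "\<phi> 0 = 0"
    by (simp add: \<phi>_def)
  note invariant = homotopic_index_sum[of \<chi> \<tau> \<chi> \<phi>, OF odd odd this]
  have "index_sum \<chi> \<chi> \<phi> p [u, v, u, v] = 1"
    using assms(2-4) by (simp add: index_sum_abab \<chi>_def \<phi>_def)
  moreover have "index_sum \<chi> \<chi> \<phi> (\<lambda>_. undefined) [] = 0"
    by (simp add: index_sum_def)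
  moreover have "index_sum \<chi> \<chi> \<phi> (\<tau> \<circ> p) [v, u, v, u] = -1"
    using assms(2-4) by (simp add: index_sum_abab \<chi>_def \<phi>_def)
  ultimately show ?thesis
    unfolding contractible_def homot_skew_symmetric_def empty_nanoword_def
      nw_opposite_def nw_inverse_def
    by (auto dest: invariant)
qed

lemma abab_homotopy_symmetries:
  assumes "\<And>x. \<tau> (\<tau> x) = x" "is_nanoword (A, p, [u, v, u, v])" "u \<noteq> v" "p v \<noteq> \<tau> (p u)"
  shows "\<not> contractible \<tau> (A, p, [u, v, u, v]) \<and> \<not> homot_skew_symmetric \<tau> (A, p, [u, v, u, v])
    \<and> (homot_symmetric \<tau> (A, p, [u, v, u, v]) \<longleftrightarrow> nw_symmetric (A, p, [u, v, u, v]))"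
proof (cases "p v = p u")
  case True
  then have "nw_symmetric (A, p, [u, v, u, v])"
    using abab_symmetric_iff[OF assms(2,3)] by simp
  with True assms show ?thesis
    using abab_index_sum_obstruction[OF assms(1,3)] symmetric_imp_homot_symmetric by auto
next
  case False
  then show ?thesis
    using abab_link_parity_obstruction[OF assms(1,3) False assms(4)]
      abab_symmetric_iff[OF assms(2,3)] by auto
qed

theorem corollary8p4:
  fixes \<tau> :: "'a \<Rightarrow> 'a" and n :: "'a nanoword"
  assumes "\<And>x. \<tau> (\<tau> x) = x"
    and "is_nanoword n"
    and "nw_length n \<le> 4"
  shows "(homot_skew_symmetric \<tau> n \<longleftrightarrow> contractible \<tau> n)
       \<and> (homot_symmetric \<tau> n \<longleftrightarrow> contractible \<tau> n \<or> nw_symmetric n)"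
proof -
  obtain A p w where n: "n = (A, p, w)"
    by (cases n)
  with assms(2,3) have nw: "is_nanoword (A, p, w)" "length w \<le> 4"
    by (simp_all add: nw_length_def)
  show ?thesis
  proof (rule short_nanoword_contractible_or_abab[OF assms(1) nw])
    assume "contractible \<tau> (A, p, w)"
    then show ?thesis
      using contractible_imp_homot_symmetric contractible_imp_homot_skew_symmetric n by blast
  next
    fix u v
    assume "u \<noteq> v" "w = [u, v, u, v]" "p v \<noteq> \<tau> (p u)"
    then show ?thesis
      using abab_homotopy_symmetries[OF assms(1)] nw(1) n by auto
  qed
qed

end
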